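(* Let $\mathcal{G}$ be an ordered groupoid with $\mathcal{G}_0$ finite, let $\alpha=(A_g,\alpha_g)_{g\in\mathcal{G}}$ be a unital P.O. action of $\mathcal{G}$ on a ring $A$, and let $\beta=(B_g,\beta_g)_{g\in\mathcal{G}}$ be a globalization of $\alpha$ on a ring $B$ in which each $\varphi_e:A_e\to B_e$ is the inclusion map. Let $R=A\ltimes^o_\alpha\mathcal{G}$ and $T=B\ltimes^o_\beta\mathcal{G}$, with $1_R=\sum_{e\in\mathcal{G}_0}\overline{1_e\delta_e}$ regarded as an element of $T$ (and $R$ regarded inside $T$ via $\overline{a\delta_g}\mapsto\overline{a\delta_g}$). Then: (i) $T1_R=\sum_{g\in\mathcal{G}}\overline{\beta_g(A_{d(g)})\delta_g}$; (ii) $1_RT=\sum_{g\in\mathcal{G}}\overline{A_{r(g)}\delta_g}$; (iii) $1_RT1_R=R$; (iv) $T1_RT=T$.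
   Context: A groupoid $\mathcal{G}$ is a small category in which every morphism is invertible; $\mathcal{G}_0\subseteq\mathcal{G}$ denotes the identities, $d(g)=g^{-1}g$, $r(g)=gg^{-1}$. $\mathcal{G}$ is ordered if it carries a partial order $\le$ with: (OG1) $g\le h\Rightarrow g^{-1}\le h^{-1}$; (OG2) $g\le h$, $k\le\ell$, $gk,h\ell$ defined $\Rightarrow gk\le h\ell$; (OG3) for $e\in\mathcal{G}_0$, $e\le d(g)$, there is a unique $(g|e)\le g$ with $d(g|e)=e$; (OG3* ) for $e\le r(g)$ there is a unique $(e|g)\le g$ with $r(e|g)=e$. A partial action $\alpha=(A_g,\alpha_g)_{g\in\mathcal{G}}$ on a ring $A$: ideals $A_{r(g)}\triangleleft A$, $A_g\triangleleft A_{r(g)}$, ring isomorphisms $\alpha_g:A_{g^{-1}}\to A_g$ with (P1) $\alpha_e=\mathrm{Id}_{A_e}$ for $e\in\mathcal{G}_0$ and $A=\sum_{e\in\mathcal{G}_0}A_e$; (P2) $\alpha_h^{-1}(A_{g^{-1}}\cap A_h)\subseteq A_{(gh)^{-1}}$ whenever $gh$ is defined; (P3) $\alpha_g\alpha_h(a)=\alpha_{gh}(a)$ whenever $gh$ is defined and $a\in\alpha_h^{-1}(A_{g^{-1}}\cap A_h)$. P.O. action: additionally (PO) $g\le h\Rightarrow A_g\subseteq A_h$ and $\alpha_g=\alpha_h|_{A_{g^{-1}}}$. Unital: each $A_g=A1_g$ for a central idempotent $1_g$ of $A$. Ordered global action: a P.O. action with $A_g=A_{r(g)}$ for all $g$.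 With $\varphi_e$ the inclusions, $\beta$ being a globalization of $\alpha$ means: $\beta$ is an ordered global action of $\mathcal{G}$ on $B$, each $A_e$ ($e\in\mathcal{G}_0$) is an ideal of $B_e$, $A_g=A_{r(g)}\cap\beta_g(A_{d(g)})$, $\beta_g(a)=\alpha_g(a)$ for $a\in A_{g^{-1}}$, and $B_g=\sum_{r(h)\le r(g)}\beta_h(A_{d(h)})$ for all $g$. For a P.O. action $\alpha$ on $A$, the partial skew groupoid ring is $A\ltimes_\alpha\mathcal{G}=\bigoplus_{g\in\mathcal{G}}A_g\delta_g$ (formal symbols $\delta_g$), with componentwise addition and product $(a_g\delta_g)(b_h\delta_h)=\alpha_g(\alpha_{g^{-1}}(a_g)b_h)\delta_{gh}$ if $gh$ is defined and $0$ otherwise; it is associative when $\alpha$ is unital. The partial skew ordered groupoid ring is $A\ltimes^o_\alpha\mathcal{G}=(A\ltimes_\alpha\mathcal{G})/N$, where $N$ is the ideal generated by $\{a\delta_g-a\delta_h: g\le h,\ a\in A_g\}$; $\overline{x}$ denotes the class of $x$, and $\overline{X\delta_g}=\{\overline{x\delta_g}:x\in X\}$. *)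

theory Defs
  imports Main
begin

text \<open>A groupoid is a small category (morphisms gcar, identities gobj \<subseteq> gcar)
  in which every morphism is invertible.  gdom g = d(g) = g^-1 g, gcod g = r(g) = g g^-1;
  the composite gcomp g h (= gh) is defined iff gdom g = gcod h.  gle is the order.\<close>

record 'g ogrpd =
  gcar  :: "'g set"
  gobj  :: "'g set"
  gdom  :: "'g \<Rightarrow> 'g"
  gcod  :: "'g \<Rightarrow> 'g"
  gcomp :: "'g \<Rightarrow> 'g \<Rightarrow> 'g"
  ginv  :: "'g \<Rightarrow> 'g"
  gle   :: "'g \<Rightarrow> 'g \<Rightarrow> bool"

definition gdef :: "'g ogrpd \<Rightarrow> 'g \<Rightarrow> 'g \<Rightarrow> bool" where
  "gdef G g h \<longleftrightarrow> gdom G g = gcod G h"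

definition groupoid :: "'g ogrpd \<Rightarrow> bool" where
  "groupoid G \<longleftrightarrow>
     gobj G \<subseteq> gcar G \<and>
     (\<forall>g\<in>gcar G. gdom G g \<in> gobj G \<and> gcod G g \<in> gobj G) \<and>
     (\<forall>e\<in>gobj G. gdom G e = e \<and> gcod G e = e) \<and>
     (\<forall>g\<in>gcar G. \<forall>h\<in>gcar G. gdef G g h \<longrightarrow>
        gcomp G g h \<in> gcar G \<and> gdom G (gcomp G g h) = gdom G h \<and>
        gcod G (gcomp G g h) = gcod G g) \<and>
     (\<forall>g\<in>gcar G. \<forall>h\<in>gcar G. \<forall>k\<in>gcar G. gdef G g h \<longrightarrow> gdef G h k \<longrightarrow>
        gcomp G (gcomp G g h) k = gcomp G g (gcomp G h k)) \<and>
     (\<forall>g\<in>gcar G. gcomp G g (gdom G g) = g \<and> gcomp G (gcod G g) g = g) \<and>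
     (\<forall>g\<in>gcar G. ginv G g \<in> gcar G \<and> gdom G (ginv G g) = gcod G g \<and>
        gcod G (ginv G g) = gdom G g \<and>
        gcomp G (ginv G g) g = gdom G g \<and> gcomp G g (ginv G g) = gcod G g)"

definition ordered_groupoid :: "'g ogrpd \<Rightarrow> bool" where
  "ordered_groupoid G \<longleftrightarrow> groupoid G \<and>
     (\<forall>g\<in>gcar G. gle G g g) \<and>
     (\<forall>g\<in>gcar G. \<forall>h\<in>gcar G. gle G g h \<longrightarrow> gle G h g \<longrightarrow> g = h) \<and>
     (\<forall>g\<in>gcar G. \<forall>h\<in>gcar G. \<forall>k\<in>gcar G. gle G g h \<longrightarrow> gle G h k \<longrightarrow> gle G g k) \<and>
     \<comment> \<open>OG1\<close>
     (\<forall>g\<in>gcar G. \<forall>h\<in>gcar G. gle G g h \<longrightarrow> gle G (ginv G g) (ginv G h)) \<and>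
     \<comment> \<open>OG2\<close>
     (\<forall>g\<in>gcar G. \<forall>h\<in>gcar G. \<forall>k\<in>gcar G. \<forall>l\<in>gcar G.
        gle G g h \<longrightarrow> gle G k l \<longrightarrow> gdef G g k \<longrightarrow> gdef G h l \<longrightarrow>
        gle G (gcomp G g k) (gcomp G h l)) \<and>
     \<comment> \<open>OG3\<close>
     (\<forall>g\<in>gcar G. \<forall>e\<in>gobj G. gle G e (gdom G g) \<longrightarrow>
        (\<exists>!x. x \<in> gcar G \<and> gle G x g \<and> gdom G x = e)) \<and>
     \<comment> \<open>OG3*\<close>
     (\<forall>g\<in>gcar G. \<forall>e\<in>gobj G. gle G e (gcod G g) \<longrightarrow>
        (\<exists>!x. x \<in> gcar G \<and> gle G x g \<and> gcod G x = e))"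

text \<open>Everything lives inside the ring B, taken to be the whole type 'b;
  A is a subring of B (the maps phi_e are inclusions).\<close>

definition subring :: "'b::ring set \<Rightarrow> bool" where
  "subring S \<longleftrightarrow> 0 \<in> S \<and> (\<forall>x\<in>S. \<forall>y\<in>S. x + y \<in> S \<and> x - y \<in> S \<and> x * y \<in> S)"

definition is_ideal :: "'b::ring set \<Rightarrow> 'b set \<Rightarrow> bool" where
  "is_ideal I S \<longleftrightarrow> I \<subseteq> S \<and> 0 \<in> I \<and> (\<forall>x\<in>I. \<forall>y\<in>I. x + y \<in> I \<and> - x \<in> I) \<and>
     (\<forall>x\<in>I. \<forall>s\<in>S. s * x \<in> I \<and> x * s \<in> I)"

definition ring_iso :: "('b::ring \<Rightarrow> 'b) \<Rightarrow> 'b set \<Rightarrow> 'b set \<Rightarrow> bool" where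
  "ring_iso f X Y \<longleftrightarrow> bij_betw f X Y \<and>
     (\<forall>x\<in>X. \<forall>y\<in>X. f (x + y) = f x + f y \<and> f (x * y) = f x * f y)"

definition fsum_sets :: "'i set \<Rightarrow> ('i \<Rightarrow> 'b::comm_monoid_add set) \<Rightarrow> 'b set" where
  "fsum_sets I F = {(\<Sum>i\<in>S. x i) | S x. finite S \<and> S \<subseteq> I \<and> (\<forall>i\<in>S. x i \<in> F i)}"

definition partial_action ::
  "'g ogrpd \<Rightarrow> 'b::ring set \<Rightarrow> ('g \<Rightarrow> 'b set) \<Rightarrow> ('g \<Rightarrow> 'b \<Rightarrow> 'b) \<Rightarrow> bool" where
  "partial_action G A As al \<longleftrightarrow> subring A \<and>
     (\<forall>g\<in>gcar G. is_ideal (As (gcod G g)) A \<and> is_ideal (As g) (As (gcod G g))) \<and>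
     (\<forall>g\<in>gcar G. ring_iso (al g) (As (ginv G g)) (As g)) \<and>
     \<comment> \<open>P1\<close>
     (\<forall>e\<in>gobj G. \<forall>a\<in>As e. al e a = a) \<and> A = fsum_sets (gobj G) As \<and>
     \<comment> \<open>P2, P3\<close>
     (\<forall>g\<in>gcar G. \<forall>h\<in>gcar G. gdef G g h \<longrightarrow>
        (\<forall>a\<in>As (ginv G h). al h a \<in> As (ginv G g) \<inter> As h \<longrightarrow>
           a \<in> As (ginv G (gcomp G g h)) \<and> al g (al h a) = al (gcomp G g h) a))"

definition po_action ::
  "'g ogrpd \<Rightarrow> 'b::ring set \<Rightarrow> ('g \<Rightarrow> 'b set) \<Rightarrow> ('g \<Rightarrow> 'b \<Rightarrow> 'b) \<Rightarrow> bool" where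
  "po_action G A As al \<longleftrightarrow> partial_action G A As al \<and>
     (\<forall>g\<in>gcar G. \<forall>h\<in>gcar G. gle G g h \<longrightarrow>
        As g \<subseteq> As h \<and> (\<forall>a\<in>As (ginv G g). al g a = al h a))"

text \<open>Unital: A_g = A 1_g with 1_g a central idempotent of A; the idempotents are
  given by the function u.\<close>
definition unital_action ::
  "'g ogrpd \<Rightarrow> 'b::ring set \<Rightarrow> ('g \<Rightarrow> 'b set) \<Rightarrow> ('g \<Rightarrow> 'b) \<Rightarrow> bool" where
  "unital_action G A As u \<longleftrightarrow>
     (\<forall>g\<in>gcar G. u g \<in> A \<and> u g * u g = u g \<and> (\<forall>x\<in>A. u g * x = x * u g) \<and>
        As g = (\<lambda>a. a * u g) ` A)"

definition ordered_global_action ::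
  "'g ogrpd \<Rightarrow> ('g \<Rightarrow> 'b::ring set) \<Rightarrow> ('g \<Rightarrow> 'b \<Rightarrow> 'b) \<Rightarrow> bool" where
  "ordered_global_action G Bs be \<longleftrightarrow> po_action G UNIV Bs be \<and>
     (\<forall>g\<in>gcar G. Bs g = Bs (gcod G g))"

definition globalization ::
  "'g ogrpd \<Rightarrow> 'b::ring set \<Rightarrow> ('g \<Rightarrow> 'b set) \<Rightarrow> ('g \<Rightarrow> 'b \<Rightarrow> 'b)
     \<Rightarrow> ('g \<Rightarrow> 'b set) \<Rightarrow> ('g \<Rightarrow> 'b \<Rightarrow> 'b) \<Rightarrow> bool" where
  "globalization G A As al Bs be \<longleftrightarrow> ordered_global_action G Bs be \<and>
     (\<forall>e\<in>gobj G. is_ideal (As e) (Bs e)) \<and>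
     (\<forall>g\<in>gcar G. As g = As (gcod G g) \<inter> be g ` As (gdom G g)) \<and>
     (\<forall>g\<in>gcar G. \<forall>a\<in>As (ginv G g). be g a = al g a) \<and>
     (\<forall>g\<in>gcar G. Bs g = fsum_sets {h\<in>gcar G. gle G (gcod G h) (gcod G g)}
                                   (\<lambda>h. be h ` As (gdom G h)))"

text \<open>An element sum_g a_g delta_g of A \<rtimes>_alpha G is represented by the finitely
  supported function g \<mapsto> a_g (with a_g \<in> A_g, zero outside G).\<close>

definition skew_carrier :: "'g ogrpd \<Rightarrow> ('g \<Rightarrow> 'b::ring set) \<Rightarrow> ('g \<Rightarrow> 'b) set" where
  "skew_carrier G As = {x. finite {g. x g \<noteq> 0} \<and> (\<forall>g. g \<notin> gcar G \<longrightarrow> x g = 0) \<and>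
                         (\<forall>g\<in>gcar G. x g \<in> As g)}"

definition dlt :: "'g \<Rightarrow> 'b::ring \<Rightarrow> ('g \<Rightarrow> 'b)" where
  "dlt g a = (\<lambda>k. if k = g then a else 0)"

definition sadd :: "('g \<Rightarrow> 'b::ring) \<Rightarrow> ('g \<Rightarrow> 'b) \<Rightarrow> ('g \<Rightarrow> 'b)" where
  "sadd x y = (\<lambda>k. x k + y k)"

text \<open>(a_g delta_g)(b_h delta_h) = alpha_g(alpha_{g^-1}(a_g) b_h) delta_{gh} if gh is defined, else 0.\<close>
definition skew_mult ::
  "'g ogrpd \<Rightarrow> ('g \<Rightarrow> 'b::ring \<Rightarrow> 'b) \<Rightarrow> ('g \<Rightarrow> 'b) \<Rightarrow> ('g \<Rightarrow> 'b) \<Rightarrow> ('g \<Rightarrow> 'b)" where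
  "skew_mult G al x y = (\<lambda>k. \<Sum>p\<in>{(g, h). g \<in> gcar G \<and> h \<in> gcar G \<and> x g \<noteq> 0 \<and> y h \<noteq> 0 \<and>
         gdef G g h \<and> gcomp G g h = k}.
       al (fst p) (al (ginv G (fst p)) (x (fst p)) * y (snd p)))"

definition skew_ideal :: "('g \<Rightarrow> 'b::ring) set \<Rightarrow> (('g \<Rightarrow> 'b) \<Rightarrow> ('g \<Rightarrow> 'b) \<Rightarrow> ('g \<Rightarrow> 'b))
     \<Rightarrow> ('g \<Rightarrow> 'b) set \<Rightarrow> bool" where
  "skew_ideal C m I \<longleftrightarrow> I \<subseteq> C \<and> (\<lambda>k. 0) \<in> I \<and>
     (\<forall>x\<in>I. \<forall>y\<in>I. sadd x y \<in> I \<and> (\<lambda>k. - x k) \<in> I) \<and>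
     (\<forall>x\<in>I. \<forall>c\<in>C. m c x \<in> I \<and> m x c \<in> I)"

definition gen_ideal :: "('g \<Rightarrow> 'b::ring) set \<Rightarrow> (('g \<Rightarrow> 'b) \<Rightarrow> ('g \<Rightarrow> 'b) \<Rightarrow> ('g \<Rightarrow> 'b))
     \<Rightarrow> ('g \<Rightarrow> 'b) set \<Rightarrow> ('g \<Rightarrow> 'b) set" where
  "gen_ideal C m X = \<Inter>{I. skew_ideal C m I \<and> X \<subseteq> I}"

text \<open>The ideal N of the partial skew groupoid ring defining the ordered one.\<close>
definition ord_ideal :: "'g ogrpd \<Rightarrow> ('g \<Rightarrow> 'b::ring set) \<Rightarrow> ('g \<Rightarrow> 'b \<Rightarrow> 'b) \<Rightarrow> ('g \<Rightarrow> 'b) set" where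
  "ord_ideal G As al = gen_ideal (skew_carrier G As) (skew_mult G al)
     {(\<lambda>k. dlt g a k - dlt h a k) | g h a. g \<in> gcar G \<and> h \<in> gcar G \<and> gle G g h \<and> a \<in> As g}"

text \<open>A subset of the quotient ring (C/N) is represented by its full preimage in C:
  the preimage of the image of X is X + N.\<close>
definition sat :: "('g \<Rightarrow> 'b::ring) set \<Rightarrow> ('g \<Rightarrow> 'b) set \<Rightarrow> ('g \<Rightarrow> 'b) set" where
  "sat N X = {sadd x n | x n. x \<in> X \<and> n \<in> N}"

definition skew_fsum :: "'i set \<Rightarrow> ('i \<Rightarrow> ('g \<Rightarrow> 'b::ring) set) \<Rightarrow> ('g \<Rightarrow> 'b) set" where
  "skew_fsum I F = {(\<lambda>k. \<Sum>i\<in>S. x i k) | S x. finite S \<and> S \<subseteq> I \<and> (\<forall>i\<in>S. x i \<in> F i)}"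

definition oneR :: "'g ogrpd \<Rightarrow> ('g \<Rightarrow> 'b::ring) \<Rightarrow> ('g \<Rightarrow> 'b)" where
  "oneR G u = (\<lambda>k. if k \<in> gobj G then u k else 0)"

end

theory Submission
  imports Defs
begin

text \<open>
  Multiplying by 1_R = \<Sum>_e 1_e \<delta>_e touches a single summand:
  (t 1_R)_k = \<beta>_k(\<beta>_{k^-1}(t_k) 1_{d(k)}) and (1_R t)_k = 1_{r(k)} t_k.
  As 1_e is the unit of the ideal A_e of B_e, the first coefficient ranges exactly over
  \<beta>_k(A_{d(k)}) and the second over A_{r(k)}, and both products fix such elements.
  This gives (i) and (ii), and (iii) follows from A_k = A_{r(k)} \<inter> \<beta>_k(A_{d(k)});
  these three hold already in the skew groupoid ring, before dividing by N.

  For (iv), every b \<in> B_g is a sum of elements \<beta>_h(a) with a \<in> A_{d(h)} and r(h) \<le> r(g).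
  Let g' \<le> g be the restriction of g with r(g') = r(h) (OG3*). Then
  \<beta>_h(a) \<delta>_g' = (\<beta>_h(a) \<delta>_h) 1_R (1_{d(h)} \<delta>_{h^-1 g'}) lies in T 1_R T,
  and \<beta>_h(a) \<delta>_g \<equiv> \<beta>_h(a) \<delta>_g' modulo N because g' \<le> g.
\<close>

lemma ordered_groupoid_cod_restriction:
  assumes "ordered_groupoid G" "g \<in> gcar G" "e \<in> gobj G" "gle G e (gcod G g)"
  obtains r where "r \<in> gcar G" "gle G r g" "gcod G r = e"
  using assms unfolding ordered_groupoid_def by metis

lemma retraction_image_eq:
  assumes "\<And>t. t \<in> C \<Longrightarrow> F t \<in> V" "\<And>v. v \<in> V \<Longrightarrow> v \<in> C \<and> F v = v"
  shows "{F t | t. t \<in> C} = V"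
proof (intro equalityI subsetI)
  fix v assume "v \<in> V"
  then have "v = F v \<and> v \<in> C" using assms(2) by simp
  then show "v \<in> {F t | t. t \<in> C}" by blast
qed (use assms(1) in blast)

definition fsupp_sections :: "'i set \<Rightarrow> ('i \<Rightarrow> 'b::zero set) \<Rightarrow> ('i \<Rightarrow> 'b) set" where
  "fsupp_sections I V = {f. finite {k. f k \<noteq> 0} \<and> (\<forall>k. k \<notin> I \<longrightarrow> f k = 0) \<and> (\<forall>k\<in>I. f k \<in> V k)}"

lemma skew_carrier_eq_fsupp_sections: "skew_carrier G V = fsupp_sections (gcar G) V"
  unfolding skew_carrier_def fsupp_sections_def ..

lemma fsupp_sections_mono:
  "(\<And>k. k \<in> I \<Longrightarrow> V k \<subseteq> W k) \<Longrightarrow> fsupp_sections I V \<subseteq> fsupp_sections I W"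
  unfolding fsupp_sections_def by blast

lemma fsupp_sections_refine:
  "f \<in> fsupp_sections I W \<Longrightarrow> (\<And>k. k \<in> I \<Longrightarrow> f k \<in> V k) \<Longrightarrow> f \<in> fsupp_sections I V"
  unfolding fsupp_sections_def by blast

lemma dlt_in_fsupp_sections:
  assumes "g \<in> I" "v \<in> V g" "\<And>k. k \<in> I \<Longrightarrow> 0 \<in> V k"
  shows "dlt g v \<in> fsupp_sections I V"
proof -
  have "{k. dlt g v k \<noteq> 0} \<subseteq> {g}" by (auto simp: dlt_def)
  then show ?thesis using assms unfolding fsupp_sections_def by (auto simp: dlt_def finite_subset)
qed

lemma sum_dlt_apply: "finite S \<Longrightarrow> (\<Sum>i\<in>S. dlt i (v i) k) = (if k \<in> S then v k else 0)"
  unfolding dlt_def by (rule sum.delta')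

lemma dlt_sum: "dlt g (\<Sum>i\<in>S. v i) = (\<lambda>k. \<Sum>i\<in>S. dlt g (v i) k)"
  by (simp add: dlt_def fun_eq_iff)

lemma sum_dlt_support:
  assumes "finite {g. f g \<noteq> 0}"
  shows "(\<lambda>k. \<Sum>g\<in>{g. f g \<noteq> 0}. dlt g (f g) k) = f"
  using sum_dlt_apply[OF assms, of f] by (auto simp: fun_eq_iff)

lemma skew_fsum_dlt_eq_fsupp_sections:
  assumes "\<And>g. g \<in> I \<Longrightarrow> 0 \<in> V g"
  shows "skew_fsum I (\<lambda>g. dlt g ` V g) = fsupp_sections I V"
proof (intro equalityI subsetI)
  fix f assume "f \<in> skew_fsum I (\<lambda>g. dlt g ` V g)"
  then obtain S x where f: "f = (\<lambda>k. \<Sum>i\<in>S. x i k)" and S: "finite S" "S \<subseteq> I"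
    and x: "\<forall>i\<in>S. x i \<in> dlt i ` V i"
    unfolding skew_fsum_def by blast
  have "\<forall>i\<in>S. \<exists>v. v \<in> V i \<and> x i = dlt i v" using x by blast
  then obtain v where v: "\<forall>i\<in>S. v i \<in> V i \<and> x i = dlt i (v i)" by metis
  have fk: "f k = (if k \<in> S then v k else 0)" for k
    using sum_dlt_apply[OF S(1), of v k] v f by simp
  have "{k. f k \<noteq> 0} \<subseteq> S" using fk by auto
  then show "f \<in> fsupp_sections I V"
    using fk v S assms unfolding fsupp_sections_def by (auto simp: finite_subset)
next
  fix f assume f: "f \<in> fsupp_sections I V"
  let ?S = "{k. f k \<noteq> 0}"
  have "finite ?S" "?S \<subseteq> I" "\<forall>i\<in>?S. dlt i (f i) \<in> dlt i ` V i"
    using f unfolding fsupp_sections_def by auto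
  then show "f \<in> skew_fsum I (\<lambda>g. dlt g ` V g)"
    unfolding skew_fsum_def using sum_dlt_support[of f]
    by (auto intro!: exI[of _ ?S] exI[of _ "\<lambda>i. dlt i (f i)"])
qed

lemma pointwise_sum_closed:
  assumes "(\<lambda>k. 0) \<in> X" "\<And>a b. a \<in> X \<Longrightarrow> b \<in> X \<Longrightarrow> sadd a b \<in> X"
    and "\<And>i. i \<in> I \<Longrightarrow> f i \<in> X"
  shows "(\<lambda>k. \<Sum>i\<in>I. f i k) \<in> X"
proof (cases "finite I")
  case True
  then show ?thesis using assms(3)
  proof (induction I rule: finite_induct)
    case (insert j I)
    have "(\<lambda>k. \<Sum>i\<in>insert j I. f i k) = sadd (f j) (\<lambda>k. \<Sum>i\<in>I. f i k)"
      using insert.hyps by (simp add: sadd_def)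
    then show ?case using insert assms(2) by simp
  qed (simp add: assms(1))
qed (simp add: assms(1))

lemma is_ideal_sum:
  assumes "is_ideal I S" "\<And>i. i \<in> F \<Longrightarrow> f i \<in> I"
  shows "sum f F \<in> I"
proof (cases "finite F")
  case True
  then show ?thesis using assms(2)
    by (induction F rule: finite_induct) (use assms(1) in \<open>auto simp: is_ideal_def\<close>)
qed (use assms(1) in \<open>simp add: is_ideal_def\<close>)

lemma gen_ideal_zero: "(\<lambda>k. 0) \<in> gen_ideal C mul X"
  unfolding gen_ideal_def skew_ideal_def by blast

lemma gen_ideal_sadd: "x \<in> gen_ideal C mul X \<Longrightarrow> y \<in> gen_ideal C mul X \<Longrightarrow> sadd x y \<in> gen_ideal C mul X"
  unfolding gen_ideal_def skew_ideal_def by blast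

lemma gen_ideal_uminus: "x \<in> gen_ideal C mul X \<Longrightarrow> (\<lambda>k. - x k) \<in> gen_ideal C mul X"
  unfolding gen_ideal_def skew_ideal_def by blast

lemma generators_subset_gen_ideal: "X \<subseteq> gen_ideal C mul X"
  unfolding gen_ideal_def by blast

lemma sat_memI: "x \<in> X \<Longrightarrow> n \<in> N \<Longrightarrow> sadd x n \<in> sat N X"
  unfolding sat_def by blast

lemma sat_memE:
  assumes "z \<in> sat N X"
  obtains x n where "z = sadd x n" "x \<in> X" "n \<in> N"
  using assms unfolding sat_def by blast

lemma sat_mono: "X \<subseteq> Y \<Longrightarrow> sat N X \<subseteq> sat N Y"
  unfolding sat_def by blast

lemma sat_subset_sat:
  assumes "X \<subseteq> sat N Y" "\<And>a b. a \<in> N \<Longrightarrow> b \<in> N \<Longrightarrow> sadd a b \<in> N"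
  shows "sat N X \<subseteq> sat N Y"
proof
  fix z assume "z \<in> sat N X"
  then obtain x n where z: "z = sadd x n" and "x \<in> X" "n \<in> N" by (rule sat_memE)
  then obtain y n' where x: "x = sadd y n'" and "y \<in> Y" "n' \<in> N"
    using assms(1) sat_memE by blast
  have "z = sadd y (sadd n' n)" unfolding z x by (simp add: sadd_def add.assoc)
  then show "z \<in> sat N Y" using sat_memI assms(2) \<open>y \<in> Y\<close> \<open>n \<in> N\<close> \<open>n' \<in> N\<close> by metis
qed

lemma zero_in_sat: "(\<lambda>k. 0) \<in> X \<Longrightarrow> (\<lambda>k. 0) \<in> N \<Longrightarrow> (\<lambda>k. 0) \<in> sat N X"
  using sat_memI[of "\<lambda>k. 0" X "\<lambda>k. 0" N] by (simp add: sadd_def)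

lemma sadd_in_sat:
  assumes "\<And>a b. a \<in> X \<Longrightarrow> b \<in> X \<Longrightarrow> sadd a b \<in> X"
    and "\<And>a b. a \<in> N \<Longrightarrow> b \<in> N \<Longrightarrow> sadd a b \<in> N"
    and "x \<in> sat N X" "y \<in> sat N X"
  shows "sadd x y \<in> sat N X"
proof -
  obtain a n where x: "x = sadd a n" and "a \<in> X" "n \<in> N" using assms(3) by (rule sat_memE)
  obtain b n' where y: "y = sadd b n'" and "b \<in> X" "n' \<in> N" using assms(4) by (rule sat_memE)
  have "sadd x y = sadd (sadd a b) (sadd n n')"
    unfolding x y by (simp add: sadd_def fun_eq_iff algebra_simps)
  then show ?thesis using sat_memI assms(1,2) \<open>a \<in> X\<close> \<open>b \<in> X\<close> \<open>n \<in> N\<close> \<open>n' \<in> N\<close> by metis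
qed

definition two_sided_span ::
  "('g \<Rightarrow> 'b::ring) set \<Rightarrow> (('g \<Rightarrow> 'b) \<Rightarrow> ('g \<Rightarrow> 'b) \<Rightarrow> ('g \<Rightarrow> 'b)) \<Rightarrow> ('g \<Rightarrow> 'b) \<Rightarrow> ('g \<Rightarrow> 'b) set"
where
  "two_sided_span C mul z = {(\<lambda>k. \<Sum>i\<in>S. mul (mul (x i) z) (y i) k) | S x y.
     finite (S :: nat set) \<and> (\<forall>i\<in>S. x i \<in> C \<and> y i \<in> C)}"

lemma two_sided_span_sum:
  fixes I :: "'i set"
  assumes "finite I" "\<And>i. i \<in> I \<Longrightarrow> x i \<in> C \<and> y i \<in> C"
  shows "(\<lambda>k. \<Sum>i\<in>I. mul (mul (x i) z) (y i) k) \<in> two_sided_span C mul z"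
proof -
  obtain e where e: "bij_betw e {0..<card I} I" using ex_bij_betw_nat_finite assms(1) by blast
  have "(\<lambda>k. \<Sum>i\<in>I. mul (mul (x i) z) (y i) k)
      = (\<lambda>k. \<Sum>j\<in>{0..<card I}. mul (mul ((x \<circ> e) j) z) ((y \<circ> e) j) k)"
    unfolding comp_def by (intro ext sum.reindex_bij_betw[OF e, symmetric])
  moreover have "\<forall>j\<in>{0..<card I}. (x \<circ> e) j \<in> C \<and> (y \<circ> e) j \<in> C"
    using assms(2) bij_betw_apply[OF e] by simp
  ultimately show ?thesis unfolding two_sided_span_def by blast
qed

lemma two_sided_span_zero: "(\<lambda>k. 0) \<in> two_sided_span C mul z"
  using two_sided_span_sum[of "{}"] by simp

lemma two_sided_span_product: "x \<in> C \<Longrightarrow> y \<in> C \<Longrightarrow> mul (mul x z) y \<in> two_sided_span C mul z"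
  using two_sided_span_sum[of "{()}" "\<lambda>_. x" C "\<lambda>_. y" mul z] by simp

lemma two_sided_span_sadd:
  assumes "a \<in> two_sided_span C mul z" "b \<in> two_sided_span C mul z"
  shows "sadd a b \<in> two_sided_span C mul z"
proof -
  obtain S x y T x' y' where
    a: "a = (\<lambda>k. \<Sum>i\<in>S. mul (mul (x i) z) (y i) k)" "finite (S :: nat set)" "\<forall>i\<in>S. x i \<in> C \<and> y i \<in> C" and
    b: "b = (\<lambda>k. \<Sum>i\<in>T. mul (mul (x' i) z) (y' i) k)" "finite (T :: nat set)" "\<forall>i\<in>T. x' i \<in> C \<and> y' i \<in> C"
    using assms unfolding two_sided_span_def by blast
  have "sadd a b = (\<lambda>k. \<Sum>i\<in>S <+> T. mul (mul (case_sum x x' i) z) (case_sum y y' i) k)"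
    using a(1,2) b(1,2) by (simp add: sadd_def sum.Plus comp_def)
  also have "\<dots> \<in> two_sided_span C mul z"
    using a(2,3) b(2,3) by (intro two_sided_span_sum) auto
  finally show ?thesis .
qed

locale grpd =
  fixes G :: "'g ogrpd"
  assumes groupoid: "groupoid G"
begin

lemma car_obj: "e \<in> gobj G \<Longrightarrow> e \<in> gcar G"
  and obj_dom: "g \<in> gcar G \<Longrightarrow> gdom G g \<in> gobj G"
  and obj_cod: "g \<in> gcar G \<Longrightarrow> gcod G g \<in> gobj G"
  and dom_obj: "e \<in> gobj G \<Longrightarrow> gdom G e = e"
  and cod_obj: "e \<in> gobj G \<Longrightarrow> gcod G e = e"
  and car_comp: "\<lbrakk>g \<in> gcar G; h \<in> gcar G; gdom G g = gcod G h\<rbrakk> \<Longrightarrow> gcomp G g h \<in> gcar G"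
  and cod_comp: "\<lbrakk>g \<in> gcar G; h \<in> gcar G; gdom G g = gcod G h\<rbrakk> \<Longrightarrow> gcod G (gcomp G g h) = gcod G g"
  and comp_assoc: "\<lbrakk>g \<in> gcar G; h \<in> gcar G; k \<in> gcar G; gdom G g = gcod G h; gdom G h = gcod G k\<rbrakk>
      \<Longrightarrow> gcomp G (gcomp G g h) k = gcomp G g (gcomp G h k)"
  and comp_dom: "g \<in> gcar G \<Longrightarrow> gcomp G g (gdom G g) = g"
  and comp_cod: "g \<in> gcar G \<Longrightarrow> gcomp G (gcod G g) g = g"
  and car_inv: "g \<in> gcar G \<Longrightarrow> ginv G g \<in> gcar G"
  and dom_inv: "g \<in> gcar G \<Longrightarrow> gdom G (ginv G g) = gcod G g"
  and cod_inv: "g \<in> gcar G \<Longrightarrow> gcod G (ginv G g) = gdom G g"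
  and comp_inv_left: "g \<in> gcar G \<Longrightarrow> gcomp G (ginv G g) g = gdom G g"
  and comp_inv_right: "g \<in> gcar G \<Longrightarrow> gcomp G g (ginv G g) = gcod G g"
  using groupoid unfolding groupoid_def gdef_def by blast+

lemma inv_inv: assumes g: "g \<in> gcar G" shows "ginv G (ginv G g) = g"
proof -
  let ?i = "ginv G g"
  have i: "?i \<in> gcar G" and ii: "ginv G ?i \<in> gcar G" using car_inv g by blast+
  have "ginv G ?i = gcomp G (ginv G ?i) (gcomp G ?i g)"
    using comp_dom[OF ii] comp_inv_left[OF g] dom_inv[OF i] cod_inv[OF g] by simp
  also have "\<dots> = gcomp G (gcomp G (ginv G ?i) ?i) g"
    using comp_assoc[OF ii i g] dom_inv[OF i] dom_inv[OF g] by simp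
  also have "\<dots> = g" using comp_inv_left[OF i] dom_inv[OF g] comp_cod[OF g] by simp
  finally show ?thesis .
qed

lemma inv_obj: assumes e: "e \<in> gobj G" shows "ginv G e = e"
proof -
  have c: "e \<in> gcar G" using car_obj e .
  have "ginv G e = gcomp G (ginv G e) e"
    using comp_dom[OF car_inv[OF c]] dom_inv[OF c] cod_obj[OF e] by simp
  also have "\<dots> = e" using comp_inv_left[OF c] dom_obj[OF e] by simp
  finally show ?thesis .
qed

end

locale global_action = grpd G for G :: "'g ogrpd" +
  fixes Bs :: "'g \<Rightarrow> 'b::ring set" and be :: "'g \<Rightarrow> 'b \<Rightarrow> 'b"
  assumes ordered_global: "ordered_global_action G Bs be"
begin

abbreviation TB where "TB \<equiv> skew_carrier G Bs"
abbreviation m where "m \<equiv> skew_mult G be"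
abbreviation N where "N \<equiv> ord_ideal G Bs be"

lemma partial_action_Bs: "partial_action G UNIV Bs be"
  using ordered_global unfolding ordered_global_action_def po_action_def by blast

lemma Bs_cod: "g \<in> gcar G \<Longrightarrow> Bs g = Bs (gcod G g)"
  using ordered_global unfolding ordered_global_action_def by blast

lemma Bs_inv: "g \<in> gcar G \<Longrightarrow> Bs (ginv G g) = Bs (gdom G g)"
  using Bs_cod car_inv cod_inv by metis

lemma Bs_ideal: assumes "g \<in> gcar G" shows "is_ideal (Bs g) UNIV"
proof -
  have "is_ideal (Bs (gcod G g)) UNIV"
    using partial_action_Bs assms unfolding partial_action_def by blast
  then show ?thesis using Bs_cod[OF assms] by simp
qed

lemma Bs_zero: "g \<in> gcar G \<Longrightarrow> 0 \<in> Bs g"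
  and Bs_add: "g \<in> gcar G \<Longrightarrow> x \<in> Bs g \<Longrightarrow> y \<in> Bs g \<Longrightarrow> x + y \<in> Bs g"
  and Bs_mult_right: "g \<in> gcar G \<Longrightarrow> x \<in> Bs g \<Longrightarrow> x * s \<in> Bs g"
  using Bs_ideal unfolding is_ideal_def by blast+

lemma be_iso: assumes "g \<in> gcar G" shows "ring_iso (be g) (Bs (gdom G g)) (Bs g)"
proof -
  have "ring_iso (be g) (Bs (ginv G g)) (Bs g)"
    using partial_action_Bs assms unfolding partial_action_def by blast
  then show ?thesis using Bs_inv[OF assms] by simp
qed

lemma be_in: "g \<in> gcar G \<Longrightarrow> a \<in> Bs (gdom G g) \<Longrightarrow> be g a \<in> Bs g"
  using be_iso unfolding ring_iso_def bij_betw_def by blast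

lemma be_mult: "\<lbrakk>g \<in> gcar G; a \<in> Bs (gdom G g); b \<in> Bs (gdom G g)\<rbrakk> \<Longrightarrow> be g (a * b) = be g a * be g b"
  using be_iso unfolding ring_iso_def by blast

lemma be_zero: assumes "g \<in> gcar G" shows "be g 0 = 0"
proof -
  have "0 \<in> Bs (gdom G g)" using Bs_zero car_obj obj_dom assms by blast
  then have "be g (0 + 0) = be g 0 + be g 0" using be_iso[OF assms] unfolding ring_iso_def by blast
  then show ?thesis by simp
qed

lemma be_obj: "e \<in> gobj G \<Longrightarrow> a \<in> Bs e \<Longrightarrow> be e a = a"
  using partial_action_Bs unfolding partial_action_def by blast

lemma be_comp:
  "\<lbrakk>g \<in> gcar G; h \<in> gcar G; gdom G g = gcod G h; a \<in> Bs (ginv G h); be h a \<in> Bs (ginv G g) \<inter> Bs h\<rbrakk>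
    \<Longrightarrow> be g (be h a) = be (gcomp G g h) a"
  using partial_action_Bs unfolding partial_action_def gdef_def by blast

lemma be_inv_in:
  assumes g: "g \<in> gcar G" and b: "b \<in> Bs g"
  shows "be (ginv G g) b \<in> Bs (gdom G g)"
proof -
  have "b \<in> Bs (gdom G (ginv G g))" using b Bs_cod[OF g] dom_inv[OF g] by simp
  then show ?thesis using be_in[OF car_inv[OF g]] Bs_inv[OF g] by simp
qed

lemma be_inv_cancel:
  assumes g: "g \<in> gcar G" and b: "b \<in> Bs g"
  shows "be g (be (ginv G g) b) = b"
proof -
  have i: "ginv G g \<in> gcar G" using car_inv g .
  have b': "b \<in> Bs (ginv G (ginv G g))" using inv_inv g b by simp
  have "be (ginv G g) b \<in> Bs (ginv G g)" using be_inv_in[OF g b] Bs_inv[OF g] by simp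
  then have "be g (be (ginv G g) b) = be (gcod G g) b"
    using be_comp[OF g i _ b'] cod_inv[OF g] comp_inv_right[OF g] inv_inv[OF g] b by simp
  also have "\<dots> = b" using be_obj obj_cod[OF g] b Bs_cod[OF g] by simp
  finally show ?thesis .
qed

lemma be_cancel_inv:
  assumes g: "g \<in> gcar G" and a: "a \<in> Bs (gdom G g)"
  shows "be (ginv G g) (be g a) = a"
  using be_inv_cancel[OF car_inv[OF g]] a Bs_inv[OF g] inv_inv[OF g] by simp

lemma mult_apply_eq_sum:
  assumes "finite Q" "Q \<subseteq> {(g, h). g \<in> gcar G \<and> h \<in> gcar G \<and> gdom G g = gcod G h \<and> gcomp G g h = k}"
    and "\<And>g h. \<lbrakk>g \<in> gcar G; h \<in> gcar G; x g \<noteq> 0; y h \<noteq> 0; gdom G g = gcod G h; gcomp G g h = k\<rbrakk>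
      \<Longrightarrow> (g, h) \<in> Q"
  shows "m x y k = (\<Sum>p\<in>Q. be (fst p) (be (ginv G (fst p)) (x (fst p)) * y (snd p)))"
  unfolding skew_mult_def gdef_def
proof (rule sum.mono_neutral_left[OF assms(1)])
  show "\<forall>p\<in>Q - {(g, h). g \<in> gcar G \<and> h \<in> gcar G \<and> x g \<noteq> 0 \<and> y h \<noteq> 0 \<and> gdom G g = gcod G h \<and> gcomp G g h = k}.
      be (fst p) (be (ginv G (fst p)) (x (fst p)) * y (snd p)) = 0"
    using assms(2) be_zero car_inv by fastforce
qed (use assms(3) in blast)

lemma mult_outside: assumes "k \<notin> gcar G" shows "m x y k = 0"
proof -
  have "{(g, h). g \<in> gcar G \<and> h \<in> gcar G \<and> x g \<noteq> 0 \<and> y h \<noteq> 0 \<and> gdef G g h \<and> gcomp G g h = k} = {}"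
    using assms car_comp unfolding gdef_def by blast
  then show ?thesis unfolding skew_mult_def by (simp only: sum.empty)
qed

lemma mult_dlt_dlt:
  assumes g: "g \<in> gcar G" and h: "h \<in> gcar G" and gh: "gdom G g = gcod G h"
  shows "m (dlt g a) (dlt h b) = dlt (gcomp G g h) (be g (be (ginv G g) a * b))"
proof
  fix k
  let ?Q = "if k = gcomp G g h then {(g, h)} else {}"
  have "m (dlt g a) (dlt h b) k
      = (\<Sum>p\<in>?Q. be (fst p) (be (ginv G (fst p)) (dlt g a (fst p)) * dlt h b (snd p)))"
    by (rule mult_apply_eq_sum) (use g h gh in \<open>auto simp: dlt_def split: if_splits\<close>)
  then show "m (dlt g a) (dlt h b) k = dlt (gcomp G g h) (be g (be (ginv G g) a * b)) k"
    by (simp add: dlt_def)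
qed

lemma TB_zero: "(\<lambda>k. 0) \<in> TB"
  unfolding skew_carrier_def using Bs_zero by simp

lemma TB_sadd: assumes "x \<in> TB" "y \<in> TB" shows "sadd x y \<in> TB"
proof -
  have "{g. sadd x y g \<noteq> 0} \<subseteq> {g. x g \<noteq> 0} \<union> {g. y g \<noteq> 0}" by (auto simp: sadd_def)
  then have "finite {g. sadd x y g \<noteq> 0}"
    using assms unfolding skew_carrier_def by (auto intro: finite_subset)
  then show ?thesis using assms Bs_add unfolding skew_carrier_def by (simp add: sadd_def)
qed

lemma dlt_in_TB: "g \<in> gcar G \<Longrightarrow> b \<in> Bs g \<Longrightarrow> dlt g b \<in> TB"
  unfolding skew_carrier_eq_fsupp_sections by (rule dlt_in_fsupp_sections) (auto simp: Bs_zero)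

lemma mult_closed: assumes x: "x \<in> TB" and y: "y \<in> TB" shows "m x y \<in> TB"
proof -
  define P where "P k = {(g, h). g \<in> gcar G \<and> h \<in> gcar G \<and> x g \<noteq> 0 \<and> y h \<noteq> 0 \<and> gdef G g h \<and> gcomp G g h = k}"
    for k
  have mk: "m x y k = (\<Sum>p\<in>P k. be (fst p) (be (ginv G (fst p)) (x (fst p)) * y (snd p)))" for k
    unfolding skew_mult_def P_def ..
  have "{k. m x y k \<noteq> 0} \<subseteq> (\<lambda>p. gcomp G (fst p) (snd p)) ` ({g. x g \<noteq> 0} \<times> {h. y h \<noteq> 0})"
  proof
    fix k assume "k \<in> {k. m x y k \<noteq> 0}"
    then obtain p where "p \<in> P k" unfolding mk using sum.not_neutral_contains_not_neutral by blast
    then obtain g h where "p = (g, h)" "k = gcomp G g h" "x g \<noteq> 0" "y h \<noteq> 0"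
      unfolding P_def by blast
    then show "k \<in> (\<lambda>p. gcomp G (fst p) (snd p)) ` ({g. x g \<noteq> 0} \<times> {h. y h \<noteq> 0})"
      by (intro image_eqI[of _ _ "(g, h)"]) auto
  qed
  then have "finite {k. m x y k \<noteq> 0}"
    using x y unfolding skew_carrier_def by (auto intro: finite_subset)
  moreover have "m x y k \<in> Bs k" if k: "k \<in> gcar G" for k
    unfolding mk
  proof (rule is_ideal_sum[OF Bs_ideal[OF k]])
    fix p assume "p \<in> P k"
    then obtain g h where p: "p = (g, h)" "g \<in> gcar G" "h \<in> gcar G" "gdom G g = gcod G h" "gcomp G g h = k"
      unfolding P_def gdef_def by blast
    have "Bs g = Bs k" using Bs_cod[OF p(2)] Bs_cod[OF k] cod_comp[OF p(2-4)] p(5) by simp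
    moreover have "be (ginv G g) (x g) * y h \<in> Bs (gdom G g)"
      using be_inv_in[OF p(2)] Bs_mult_right[OF car_obj[OF obj_dom[OF p(2)]]] p(2) x
      unfolding skew_carrier_def by blast
    ultimately show "be (fst p) (be (ginv G (fst p)) (x (fst p)) * y (snd p)) \<in> Bs k"
      using be_in p by auto
  qed
  ultimately show ?thesis using mult_outside unfolding skew_carrier_def by blast
qed

lemma N_zero: "(\<lambda>k. 0) \<in> N"
  unfolding ord_ideal_def by (rule gen_ideal_zero)

lemma N_sadd: "x \<in> N \<Longrightarrow> y \<in> N \<Longrightarrow> sadd x y \<in> N"
  unfolding ord_ideal_def by (rule gen_ideal_sadd)

end

locale unital_globalization =
  fixes G :: "'g ogrpd" and A :: "'b::ring set" and As :: "'g \<Rightarrow> 'b set" and al :: "'g \<Rightarrow> 'b \<Rightarrow> 'b"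
    and u :: "'g \<Rightarrow> 'b" and Bs :: "'g \<Rightarrow> 'b set" and be :: "'g \<Rightarrow> 'b \<Rightarrow> 'b"
  assumes ordered: "ordered_groupoid G" and finite_objects: "finite (gobj G)"
    and unital: "unital_action G A As u" and globalization: "globalization G A As al Bs be"

sublocale unital_globalization \<subseteq> global_action G Bs be
proof unfold_locales
  show "groupoid G" using ordered unfolding ordered_groupoid_def by blast
  show "ordered_global_action G Bs be" using globalization unfolding globalization_def by blast
qed

context unital_globalization
begin

abbreviation one where "one \<equiv> oneR G u"

lemma As_ideal: "e \<in> gobj G \<Longrightarrow> is_ideal (As e) (Bs e)"
  and As_eq: "g \<in> gcar G \<Longrightarrow> As g = As (gcod G g) \<inter> be g ` As (gdom G g)"
  and Bs_eq_sums: "g \<in> gcar G \<Longrightarrow>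
    Bs g = fsum_sets {h \<in> gcar G. gle G (gcod G h) (gcod G g)} (\<lambda>h. be h ` As (gdom G h))"
  using globalization unfolding globalization_def by blast+

lemma As_zero: "e \<in> gobj G \<Longrightarrow> 0 \<in> As e"
  and As_mult_left: "e \<in> gobj G \<Longrightarrow> x \<in> As e \<Longrightarrow> s \<in> Bs e \<Longrightarrow> s * x \<in> As e"
  and As_mult_right: "e \<in> gobj G \<Longrightarrow> x \<in> As e \<Longrightarrow> s \<in> Bs e \<Longrightarrow> x * s \<in> As e"
  using As_ideal unfolding is_ideal_def by blast+

lemma As_subset_Bs: assumes g: "g \<in> gcar G" shows "As g \<subseteq> Bs g"
proof -
  have "As (gcod G g) \<subseteq> Bs (gcod G g)" using As_ideal[OF obj_cod[OF g]] unfolding is_ideal_def by blast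
  then show ?thesis using As_eq[OF g] Bs_cod[OF g] by blast
qed

lemma unit_in: assumes g: "g \<in> gcar G" shows "u g \<in> As g"
proof -
  have "u g \<in> A" "u g * u g = u g" "As g = (\<lambda>a. a * u g) ` A"
    using unital g unfolding unital_action_def by blast+
  then show ?thesis by (metis image_eqI)
qed

lemma unit_left: assumes g: "g \<in> gcar G" and a: "a \<in> As g" shows "u g * a = a"
  and unit_right: "a * u g = a"
proof -
  have u: "u g * u g = u g" "\<forall>x\<in>A. u g * x = x * u g" "As g = (\<lambda>a. a * u g) ` A"
    using unital g unfolding unital_action_def by blast+
  obtain b where b: "b \<in> A" "a = b * u g" using a u(3) by blast
  show "a * u g = a" unfolding b(2) by (simp add: mult.assoc u(1))
  show "u g * a = a" unfolding b(2) using u(1,2) b(1) by (metis mult.assoc)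
qed

lemma zero_in_be_As: "g \<in> gcar G \<Longrightarrow> 0 \<in> be g ` As (gdom G g)"
  using As_zero[OF obj_dom] be_zero by (metis image_eqI)

lemma one_in_TB: "one \<in> TB"
proof -
  have "{k. one k \<noteq> 0} \<subseteq> gobj G" by (auto simp: oneR_def split: if_splits)
  then have "finite {k. one k \<noteq> 0}" using finite_objects by (rule finite_subset)
  moreover have "one k \<in> Bs k" if "k \<in> gcar G" for k
    using unit_in As_subset_Bs Bs_zero that by (auto simp: oneR_def)
  ultimately show ?thesis using car_obj unfolding skew_carrier_def by (auto simp: oneR_def)
qed

lemma mult_one_right_apply:
  assumes k: "k \<in> gcar G"
  shows "m t one k = be k (be (ginv G k) (t k) * u (gdom G k))"
proof -
  have d: "gdom G k \<in> gobj G" using obj_dom[OF k] .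
  have "m t one k = (\<Sum>p\<in>{(k, gdom G k)}. be (fst p) (be (ginv G (fst p)) (t (fst p)) * one (snd p)))"
  proof (rule mult_apply_eq_sum)
    show "{(k, gdom G k)} \<subseteq> {(g, h). g \<in> gcar G \<and> h \<in> gcar G \<and> gdom G g = gcod G h \<and> gcomp G g h = k}"
      using k car_obj[OF d] cod_obj[OF d] comp_dom[OF k] by simp
    fix g h assume "g \<in> gcar G" "one h \<noteq> 0" "gdom G g = gcod G h" "gcomp G g h = k"
    moreover have "h \<in> gobj G" using \<open>one h \<noteq> 0\<close> by (auto simp: oneR_def split: if_splits)
    ultimately show "(g, h) \<in> {(k, gdom G k)}" using cod_obj comp_dom by force
  qed simp
  then show ?thesis using d by (simp add: oneR_def)
qed

lemma mult_one_left_apply: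
  assumes k: "k \<in> gcar G"
  shows "m one t k = u (gcod G k) * t k"
proof -
  let ?e = "gcod G k"
  have e: "?e \<in> gobj G" "?e \<in> gcar G" using obj_cod[OF k] car_obj[OF obj_cod[OF k]] by blast+
  have "m one t k = (\<Sum>p\<in>{(?e, k)}. be (fst p) (be (ginv G (fst p)) (one (fst p)) * t (snd p)))"
  proof (rule mult_apply_eq_sum)
    show "{(?e, k)} \<subseteq> {(g, h). g \<in> gcar G \<and> h \<in> gcar G \<and> gdom G g = gcod G h \<and> gcomp G g h = k}"
      using k e dom_obj[OF e(1)] comp_cod[OF k] by simp
    fix g h assume "h \<in> gcar G" "one g \<noteq> 0" "gdom G g = gcod G h" "gcomp G g h = k"
    moreover have "g \<in> gobj G" using \<open>one g \<noteq> 0\<close> by (auto simp: oneR_def split: if_splits)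
    ultimately show "(g, h) \<in> {(?e, k)}" using dom_obj comp_cod by force
  qed simp
  also have "\<dots> = be ?e (be ?e (u ?e) * t k)" using e inv_obj by (simp add: oneR_def)
  also have "\<dots> = u ?e * t k"
    using be_obj[OF e(1)] unit_in[OF e(2)] As_subset_Bs[OF e(2)] Bs_mult_right[OF e(2)] by auto
  finally show ?thesis .
qed

lemma mult_one_right_in:
  assumes t: "t \<in> TB" and k: "k \<in> gcar G"
  shows "m t one k \<in> be k ` As (gdom G k)"
proof -
  have "be (ginv G k) (t k) \<in> Bs (gdom G k)"
    using be_inv_in[OF k] t k unfolding skew_carrier_def by blast
  then have "be (ginv G k) (t k) * u (gdom G k) \<in> As (gdom G k)"
    using As_mult_left[OF obj_dom[OF k] unit_in[OF car_obj[OF obj_dom[OF k]]]] by blast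
  then show ?thesis using mult_one_right_apply[OF k] by simp
qed

lemma mult_one_left_in:
  assumes t: "t \<in> TB" and k: "k \<in> gcar G"
  shows "m one t k \<in> As (gcod G k)"
proof -
  have "t k \<in> Bs (gcod G k)" using t k Bs_cod[OF k] unfolding skew_carrier_def by blast
  then show ?thesis
    using mult_one_left_apply[OF k] As_mult_right[OF obj_cod[OF k] unit_in[OF car_obj[OF obj_cod[OF k]]]]
    by simp
qed

lemma mult_one_right_fixes:
  assumes f: "f \<in> fsupp_sections (gcar G) (\<lambda>k. be k ` As (gdom G k))"
  shows "m f one = f"
proof
  fix k show "m f one k = f k"
  proof (cases "k \<in> gcar G")
    case False
    then show ?thesis using f mult_outside unfolding fsupp_sections_def by simp
  next
    case k: True
    then obtain a where a: "a \<in> As (gdom G k)" "f k = be k a" using f unfolding fsupp_sections_def by blast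
    have d: "gdom G k \<in> gcar G" using car_obj[OF obj_dom[OF k]] .
    have "m f one k = be k (a * u (gdom G k))"
      using mult_one_right_apply[OF k] a be_cancel_inv[OF k] As_subset_Bs[OF d] by auto
    also have "\<dots> = f k" using unit_right[OF d a(1)] a(2) by simp
    finally show ?thesis .
  qed
qed

lemma mult_one_left_fixes:
  assumes f: "f \<in> fsupp_sections (gcar G) (\<lambda>k. As (gcod G k))"
  shows "m one f = f"
proof
  fix k show "m one f k = f k"
  proof (cases "k \<in> gcar G")
    case False
    then show ?thesis using f mult_outside unfolding fsupp_sections_def by simp
  next
    case True
    then show ?thesis
      using mult_one_left_apply unit_left[OF car_obj[OF obj_cod]] f unfolding fsupp_sections_def by simp
  qed
qed

lemma T_one_eq: "{m t one | t. t \<in> TB} = skew_fsum (gcar G) (\<lambda>g. dlt g ` be g ` As (gdom G g))"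
proof -
  let ?V = "\<lambda>g. be g ` As (gdom G g)"
  have "skew_fsum (gcar G) (\<lambda>g. dlt g ` ?V g) = fsupp_sections (gcar G) ?V"
    using zero_in_be_As by (rule skew_fsum_dlt_eq_fsupp_sections)
  also have "\<dots> = {m t one | t. t \<in> TB}"
  proof (rule retraction_image_eq[symmetric])
    fix t assume t: "t \<in> TB"
    have "m t one \<in> fsupp_sections (gcar G) Bs"
      using mult_closed[OF t one_in_TB] unfolding skew_carrier_eq_fsupp_sections .
    then show "m t one \<in> fsupp_sections (gcar G) ?V"
      by (rule fsupp_sections_refine) (rule mult_one_right_in[OF t])
  next
    fix f assume f: "f \<in> fsupp_sections (gcar G) ?V"
    have "?V g \<subseteq> Bs g" if "g \<in> gcar G" for g
      using be_in[OF that] As_subset_Bs[OF car_obj[OF obj_dom[OF that]]] by blast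
    then have "f \<in> TB"
      using fsupp_sections_mono[of "gcar G" ?V Bs] f unfolding skew_carrier_eq_fsupp_sections by blast
    then show "f \<in> TB \<and> m f one = f" using mult_one_right_fixes[OF f] by blast
  qed
  finally show ?thesis ..
qed

lemma one_T_eq: "{m one t | t. t \<in> TB} = skew_fsum (gcar G) (\<lambda>g. dlt g ` As (gcod G g))"
proof -
  let ?V = "\<lambda>g. As (gcod G g)"
  have "skew_fsum (gcar G) (\<lambda>g. dlt g ` ?V g) = fsupp_sections (gcar G) ?V"
    using As_zero[OF obj_cod] by (rule skew_fsum_dlt_eq_fsupp_sections)
  also have "\<dots> = {m one t | t. t \<in> TB}"
  proof (rule retraction_image_eq[symmetric])
    fix t assume t: "t \<in> TB"
    have "m one t \<in> fsupp_sections (gcar G) Bs"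
      using mult_closed[OF one_in_TB t] unfolding skew_carrier_eq_fsupp_sections .
    then show "m one t \<in> fsupp_sections (gcar G) ?V"
      by (rule fsupp_sections_refine) (rule mult_one_left_in[OF t])
  next
    fix f assume f: "f \<in> fsupp_sections (gcar G) ?V"
    have "?V g \<subseteq> Bs g" if "g \<in> gcar G" for g
      using As_subset_Bs[OF car_obj[OF obj_cod[OF that]]] Bs_cod[OF that] by simp
    then have "f \<in> TB"
      using fsupp_sections_mono[of "gcar G" ?V Bs] f unfolding skew_carrier_eq_fsupp_sections by blast
    then show "f \<in> TB \<and> m one f = f" using mult_one_left_fixes[OF f] by blast
  qed
  finally show ?thesis ..
qed

lemma corner_in_As:
  assumes t: "t \<in> TB" and k: "k \<in> gcar G"
  shows "m (m one t) one k \<in> As k"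
proof -
  let ?s = "m one t" and ?d = "gdom G k"
  have s: "?s \<in> TB" using mult_closed[OF one_in_TB t] .
  have sk: "?s k \<in> Bs k" using s k unfolding skew_carrier_def by blast
  have d: "?d \<in> gcar G" using car_obj[OF obj_dom[OF k]] .
  have ud: "u ?d \<in> Bs ?d" using unit_in[OF d] As_subset_Bs[OF d] by blast
  have "m ?s one k = be k (be (ginv G k) (?s k)) * be k (u ?d)"
    using mult_one_right_apply[OF k] be_mult[OF k be_inv_in[OF k sk] ud] by simp
  also have "\<dots> = ?s k * be k (u ?d)" using be_inv_cancel[OF k sk] by simp
  finally have "m ?s one k \<in> As (gcod G k)"
    using As_mult_right[OF obj_cod[OF k] mult_one_left_in[OF t k]] be_in[OF k ud] Bs_cod[OF k] by simp
  then show ?thesis using mult_one_right_in[OF s k] As_eq[OF k] by blast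
qed

lemma one_T_one_eq: "{m (m one t) one | t. t \<in> TB} = skew_carrier G As"
  unfolding skew_carrier_eq_fsupp_sections[of G As]
proof (rule retraction_image_eq)
  fix t assume t: "t \<in> TB"
  have "m (m one t) one \<in> fsupp_sections (gcar G) Bs"
    using mult_closed[OF mult_closed[OF one_in_TB t] one_in_TB] unfolding skew_carrier_eq_fsupp_sections .
  then show "m (m one t) one \<in> fsupp_sections (gcar G) As"
    by (rule fsupp_sections_refine) (rule corner_in_As[OF t])
next
  fix f assume f: "f \<in> fsupp_sections (gcar G) As"
  have "f \<in> TB"
    using fsupp_sections_mono[of "gcar G" As Bs] As_subset_Bs f unfolding skew_carrier_eq_fsupp_sections
    by blast
  moreover have "f \<in> fsupp_sections (gcar G) (\<lambda>k. As (gcod G k))"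
    using fsupp_sections_mono[of "gcar G" As "\<lambda>k. As (gcod G k)"] As_eq f by blast
  moreover have "f \<in> fsupp_sections (gcar G) (\<lambda>k. be k ` As (gdom G k))"
    using fsupp_sections_mono[of "gcar G" As "\<lambda>k. be k ` As (gdom G k)"] As_eq f by blast
  ultimately show "f \<in> TB \<and> m (m one f) one = f"
    using mult_one_left_fixes mult_one_right_fixes by simp
qed

lemma two_sided_span_subset_TB: "two_sided_span TB m one \<subseteq> TB"
proof
  fix z assume "z \<in> two_sided_span TB m one"
  then obtain S :: "nat set" and x y where z: "z = (\<lambda>k. \<Sum>i\<in>S. m (m (x i) one) (y i) k)" and xy: "\<forall>i\<in>S. x i \<in> TB \<and> y i \<in> TB"
    unfolding two_sided_span_def by blast
  show "z \<in> TB" unfolding z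
  proof (rule pointwise_sum_closed[OF TB_zero TB_sadd])
    fix i assume "i \<in> S"
    then have "x i \<in> TB" "y i \<in> TB" using xy by auto
    then show "m (m (x i) one) (y i) \<in> TB" using mult_closed one_in_TB by blast
  qed
qed

lemma sat_span_zero: "(\<lambda>k. 0) \<in> sat N (two_sided_span TB m one)"
  using two_sided_span_zero N_zero by (rule zero_in_sat)

lemma sat_span_sadd:
  "x \<in> sat N (two_sided_span TB m one) \<Longrightarrow> y \<in> sat N (two_sided_span TB m one)
    \<Longrightarrow> sadd x y \<in> sat N (two_sided_span TB m one)"
  using two_sided_span_sadd N_sadd by (rule sadd_in_sat)

lemma dlt_be_in_sat_span:
  assumes g: "g \<in> gcar G" and h: "h \<in> gcar G" and hg: "gle G (gcod G h) (gcod G g)"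
    and a: "a \<in> As (gdom G h)"
  shows "dlt g (be h a) \<in> sat N (two_sided_span TB m one)"
proof -
  obtain r where r: "r \<in> gcar G" "gle G r g" "gcod G r = gcod G h"
    using ordered_groupoid_cod_restriction[OF ordered g obj_cod[OF h] hg] by blast
  define b where "b = be h a"
  define s where "s = gcomp G (ginv G h) r"
  have d: "gdom G h \<in> gcar G" using car_obj[OF obj_dom[OF h]] .
  have hs: "gdom G (ginv G h) = gcod G r" using dom_inv[OF h] r(3) by simp
  have i: "ginv G h \<in> gcar G" using car_inv[OF h] .
  have "gcomp G h s = gcomp G (gcomp G h (ginv G h)) r"
    unfolding s_def using comp_assoc[OF h i r(1) cod_inv[OF h, symmetric] hs] by simp
  then have s: "s \<in> gcar G" "gcod G s = gdom G h" "gcomp G h s = r"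
    using car_comp[OF i r(1) hs] cod_comp[OF i r(1) hs] cod_inv[OF h] comp_inv_right[OF h] r(3)
      comp_cod[OF r(1)]
    unfolding s_def by simp_all
  have aB: "a \<in> Bs (gdom G h)" using a As_subset_Bs[OF d] by blast
  have bB: "b \<in> Bs h" unfolding b_def using be_in[OF h aB] .
  have "m (dlt h b) one = dlt h b"
    by (rule mult_one_right_fixes, rule dlt_in_fsupp_sections)
      (use h a zero_in_be_As b_def in auto)
  then have "m (m (dlt h b) one) (dlt s (u (gdom G h))) = dlt r (be h (a * u (gdom G h)))"
    using mult_dlt_dlt[OF h s(1)] s be_cancel_inv[OF h aB] unfolding b_def by simp
  also have "\<dots> = dlt r b" using unit_right[OF d a] unfolding b_def by simp
  finally have prod: "m (m (dlt h b) one) (dlt s (u (gdom G h))) = dlt r b" .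
  have "u (gdom G h) \<in> Bs s" using unit_in[OF d] As_subset_Bs[OF d] Bs_cod[OF s(1)] s(2) by auto
  then have "m (m (dlt h b) one) (dlt s (u (gdom G h))) \<in> two_sided_span TB m one"
    by (rule two_sided_span_product[OF dlt_in_TB[OF h bB] dlt_in_TB[OF s(1)]])
  then have span: "dlt r b \<in> two_sided_span TB m one" unfolding prod .
  have "b \<in> Bs r" using bB Bs_cod[OF h] Bs_cod[OF r(1)] r(3) by simp
  then have "(\<lambda>k. dlt r b k - dlt g b k)
      \<in> {(\<lambda>k. dlt g a k - dlt h a k) | g h a. g \<in> gcar G \<and> h \<in> gcar G \<and> gle G g h \<and> a \<in> Bs g}"
    using r(1,2) g by blast
  then have diff: "(\<lambda>k. - (dlt r b k - dlt g b k)) \<in> N"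
    unfolding ord_ideal_def by (intro gen_ideal_uminus) (rule subsetD[OF generators_subset_gen_ideal])
  have "dlt g b = sadd (dlt r b) (\<lambda>k. - (dlt r b k - dlt g b k))" by (simp add: sadd_def)
  then have "dlt g b \<in> sat N (two_sided_span TB m one)" using sat_memI[OF span diff] by simp
  then show ?thesis unfolding b_def .
qed

lemma dlt_in_sat_span:
  assumes g: "g \<in> gcar G" and b: "b \<in> Bs g"
  shows "dlt g b \<in> sat N (two_sided_span TB m one)"
proof -
  obtain S x where b_sum: "b = (\<Sum>h\<in>S. x h)" and S: "S \<subseteq> {h \<in> gcar G. gle G (gcod G h) (gcod G g)}"
    and x: "\<forall>h\<in>S. x h \<in> be h ` As (gdom G h)"
    using b Bs_eq_sums[OF g] unfolding fsum_sets_def by blast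
  have pieces: "dlt g (x h) \<in> sat N (two_sided_span TB m one)" if h: "h \<in> S" for h
  proof -
    obtain a where "a \<in> As (gdom G h)" "x h = be h a" using x h by blast
    then show ?thesis using S h dlt_be_in_sat_span[OF g] by auto
  qed
  show ?thesis
    unfolding b_sum dlt_sum by (rule pointwise_sum_closed[OF sat_span_zero sat_span_sadd pieces])
qed

lemma T_one_T_eq: "sat N (two_sided_span TB m one) = sat N TB"
proof
  show "sat N (two_sided_span TB m one) \<subseteq> sat N TB"
    using two_sided_span_subset_TB by (rule sat_mono)
  have "TB \<subseteq> sat N (two_sided_span TB m one)"
  proof
    fix t assume t: "t \<in> TB"
    then have fin: "finite {g. t g \<noteq> 0}" and supp: "\<And>g. t g \<noteq> 0 \<Longrightarrow> g \<in> gcar G \<and> t g \<in> Bs g"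
      unfolding skew_carrier_def by auto
    have "(\<lambda>k. \<Sum>g\<in>{g. t g \<noteq> 0}. dlt g (t g) k) \<in> sat N (two_sided_span TB m one)"
    proof (rule pointwise_sum_closed[OF sat_span_zero sat_span_sadd])
      fix g assume "g \<in> {g. t g \<noteq> 0}"
      then show "dlt g (t g) \<in> sat N (two_sided_span TB m one)" using supp[of g] dlt_in_sat_span by simp
    qed
    then show "t \<in> sat N (two_sided_span TB m one)" unfolding sum_dlt_support[OF fin] .
  qed
  then show "sat N TB \<subseteq> sat N (two_sided_span TB m one)"
    using N_sadd by (rule sat_subset_sat)
qed

end

theorem mainTheorem5:
  fixes G :: "'g ogrpd"
    and A :: "'b::ring set" and As :: "'g \<Rightarrow> 'b set" and al :: "'g \<Rightarrow> 'b \<Rightarrow> 'b"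
    and u :: "'g \<Rightarrow> 'b"
    and Bs :: "'g \<Rightarrow> 'b set" and be :: "'g \<Rightarrow> 'b \<Rightarrow> 'b"
  assumes "ordered_groupoid G"
    and "finite (gobj G)"
    and "po_action G A As al"
    and "unital_action G A As u"
    and "globalization G A As al Bs be"
  defines "TB \<equiv> skew_carrier G Bs"
    and "N \<equiv> ord_ideal G Bs be"
    and "m \<equiv> skew_mult G be"
    and "one \<equiv> oneR G u"
  shows "(sat N {m t one | t. t \<in> TB}
           = sat N (skew_fsum (gcar G) (\<lambda>g. dlt g ` be g ` As (gdom G g))))
         \<and> (sat N {m one t | t. t \<in> TB}
           = sat N (skew_fsum (gcar G) (\<lambda>g. dlt g ` As (gcod G g))))
         \<and> (sat N {m (m one t) one | t. t \<in> TB} = sat N (skew_carrier G As))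
         \<and> (sat N {(\<lambda>k. \<Sum>i\<in>S. m (m (x i) one) (y i) k) | S x y.
                   finite (S :: nat set) \<and> (\<forall>i\<in>S. x i \<in> TB \<and> y i \<in> TB)}
           = sat N TB)"
proof -
  interpret unital_globalization G A As al u Bs be
    using assms(1,2,4,5) by unfold_locales
  show ?thesis
    unfolding TB_def N_def m_def one_def
    using T_one_eq one_T_eq one_T_one_eq T_one_T_eq unfolding two_sided_span_def by simp
qed

end
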